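(* Let $n\geq4$ and let $U,V$ be monomials. Then $U,V\in F(J(P_{n-2})^2)$ if and only if $x_{n-1}^2U,\,x_{n-1}^2V\in F(J(P_n)^2)$. Moreover, in that case $U>_{\mathcal R}V$ (rooted order on $F(J(P_{n-2})^2)$) if and only if $x_{n-1}^2U>_{\mathcal R}x_{n-1}^2V$ (rooted order on $F(J(P_n)^2)$).
   Context: Let $K$ be a field. For $m\geq 1$, $P_m$ is the path graph on vertices $x_1,\ldots,x_m$ with edges $\{x_i,x_{i+1}\}$. The cover ideal $J(P_m)$ is generated by the monomials $\prod_{x\in C}x$ with $C$ a minimal vertex cover of $P_m$. For a monomial ideal $I$, $G(I)$ is its set of minimal monomial generators and $F(I^2)=\{uv:u,v\in G(I)\}$. The rooted list $\mathcal R(P_m)$ is defined recursively: $\mathcal R(P_1)$ empty; $\mathcal R(P_2)=x_1,x_2$; $\mathcal R(P_3)=x_2,x_1x_3$; $\mathcal R(P_4)=x_1x_3,x_2x_3,x_2x_4$; for $m\geq5$, if $\mathcal R(P_{m-2})=u_1,\ldots,u_r$ and $\mathcal R(P_{m-3})=v_1,\ldots,v_s$, then $\mathcal R(P_m)=x_{m-1}u_1,\ldots,x_{m-1}u_r,x_mx_{m-2}v_1,\ldots,x_mx_{m-2}v_s$; it lists each element of $G(J(P_m))$ once. With $\mathcal R(P_m)=u_1,\ldots,u_q$, each $M\in F(J(P_m)^2)$ can be written $u_1^{a_1}\cdots u_q^{a_q}$ with $a_i\geq0$, $\sum a_i=2$; the maximal expression of $M$ is the one with lexicographically largest exponent vector.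 The rooted order on $F(J(P_m)^2)$: $M>_{\mathcal R}N$ iff the exponent vector of the maximal expression of $M$ is lexicographically larger than that of $N$. *)

theory Defs
  imports Main "HOL-Library.Multiset" "HOL-Library.List_Lexorder"
begin

text \<open>Monomials in variables x_1, x_2, ... are represented as multisets of variable
indices (the multiset of x_i occurring with multiplicity); multiplication of monomials
is multiset sum.\<close>

type_synonym monomial = "nat multiset"

text \<open>Vertex covers of the path graph P_m on x_1..x_m with edges {x_i, x_(i+1)}.\<close>
definition vertex_cover :: "nat \<Rightarrow> nat set \<Rightarrow> bool" where
  "vertex_cover m C \<longleftrightarrow> C \<subseteq> {1..m} \<and> (\<forall>i. 1 \<le> i \<and> i < m \<longrightarrow> i \<in> C \<or> Suc i \<in> C)"

definition min_vertex_cover :: "nat \<Rightarrow> nat set \<Rightarrow> bool" where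
  "min_vertex_cover m C \<longleftrightarrow> vertex_cover m C \<and> (\<forall>D. D \<subset> C \<longrightarrow> \<not> vertex_cover m D)"

text \<open>G(J(P_m)): the minimal generators of the cover ideal, i.e. the squarefree monomials
of the minimal vertex covers (these are pairwise incomparable, hence exactly G(J(P_m))).\<close>
definition Gens :: "nat \<Rightarrow> monomial set" where
  "Gens m = {mset_set C | C. min_vertex_cover m C}"

definition F2 :: "nat \<Rightarrow> monomial set" where
  "F2 m = {u + v | u v. u \<in> Gens m \<and> v \<in> Gens m}"

fun rooted_list :: "nat \<Rightarrow> monomial list" where
  "rooted_list 0 = []"
| "rooted_list (Suc 0) = []"
| "rooted_list (Suc (Suc 0)) = [{#1#}, {#2#}]"
| "rooted_list (Suc (Suc (Suc 0))) = [{#2#}, {#1, 3#}]"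
| "rooted_list (Suc (Suc (Suc (Suc 0)))) = [{#1, 3#}, {#2, 3#}, {#2, 4#}]"
| "rooted_list (Suc (Suc (Suc (Suc (Suc k))))) =
     map (\<lambda>u. add_mset (k + 4) u) (rooted_list (k + 3)) @
     map (\<lambda>v. add_mset (k + 5) (add_mset (k + 3) v)) (rooted_list (k + 2))"

definition expressions :: "nat \<Rightarrow> monomial \<Rightarrow> nat list set" where
  "expressions m M = {a. length a = length (rooted_list m) \<and> sum_list a = 2 \<and>
      M = sum_list (map2 repeat_mset a (rooted_list m))}"

text \<open>Exponent vector of the maximal expression: the lexicographically largest one
(all vectors have the same length, so List_Lexorder is the usual lex order).\<close>
definition max_expression :: "nat \<Rightarrow> monomial \<Rightarrow> nat list" where
  "max_expression m M = Max (expressions m M)"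

definition rooted_gt :: "nat \<Rightarrow> monomial \<Rightarrow> monomial \<Rightarrow> bool" where
  "rooted_gt m M N \<longleftrightarrow> max_expression m N < max_expression m M"

end

(*
  Write N = n - 2. A minimal vertex cover of P_(N+2) containing N+1 is {N+1} together
  with a minimal vertex cover of P_N. Generators of the cover ideal are squarefree, so x_(N+1)^2 U lies in
  F(J(P_(N+2))^2) only if both factors contain x_(N+1); this gives the first equivalence.
  The rooted list R(P_(N+2)) begins with x_(N+1) R(P_N) and its remaining entries avoid
  x_(N+1), so counting the exponent of x_(N+1) shows that the expressions of x_(N+1)^2 U are
  exactly those of U padded with zeros. Padding by the same zeros preserves the
  lexicographic order of vectors of equal length, hence the maximal expressions, and with
  them the rooted orders, correspond. Nonemptiness of the sets of expressions, needed for
  their maxima to be meaningful, comes from R(P_N) listing every generator.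
*)

theory Submission
  imports Defs
begin

lemma vertex_cover_mono:
  "vertex_cover m D \<Longrightarrow> D \<subseteq> C \<Longrightarrow> C \<subseteq> {1..m} \<Longrightarrow> vertex_cover m C"
  unfolding vertex_cover_def by blast

lemma finite_vertex_cover: "vertex_cover m C \<Longrightarrow> finite C"
  unfolding vertex_cover_def using finite_subset by blast

lemma min_vertex_cover_iff_remove:
  "min_vertex_cover m C \<longleftrightarrow> vertex_cover m C \<and> (\<forall>i\<in>C. \<not> vertex_cover m (C - {i}))"
proof
  assume "vertex_cover m C \<and> (\<forall>i\<in>C. \<not> vertex_cover m (C - {i}))"
  moreover have "\<not> vertex_cover m D" if "D \<subset> C" "\<forall>i\<in>C. \<not> vertex_cover m (C - {i})"
    "C \<subseteq> {1..m}" for D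
  proof
    assume "vertex_cover m D"
    obtain i where "i \<in> C" "D \<subseteq> C - {i}" using \<open>D \<subset> C\<close> by blast
    then show False using vertex_cover_mono[OF \<open>vertex_cover m D\<close>] that by blast
  qed
  ultimately show "min_vertex_cover m C"
    unfolding min_vertex_cover_def vertex_cover_def by blast
qed (auto simp: min_vertex_cover_def)

lemma not_vertex_cover_remove_iff:
  assumes "vertex_cover m C" "i \<in> C"
  shows "\<not> vertex_cover m (C - {i}) \<longleftrightarrow> (i < m \<and> Suc i \<notin> C) \<or> (1 < i \<and> i - 1 \<notin> C)"
proof -
  have i: "1 \<le> i" "i \<le> m" and cov: "\<And>j. 1 \<le> j \<Longrightarrow> j < m \<Longrightarrow> j \<in> C \<or> Suc j \<in> C"
    using assms unfolding vertex_cover_def by auto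
  have "\<not> vertex_cover m (C - {i}) \<longleftrightarrow> (\<exists>j. 1 \<le> j \<and> j < m \<and> j \<notin> C - {i} \<and> Suc j \<notin> C - {i})"
    using assms(1) unfolding vertex_cover_def by blast
  also have "\<dots> \<longleftrightarrow> (i < m \<and> Suc i \<notin> C) \<or> (1 < i \<and> i - 1 \<notin> C)"
  proof
    assume "\<exists>j. 1 \<le> j \<and> j < m \<and> j \<notin> C - {i} \<and> Suc j \<notin> C - {i}"
    then obtain j where j: "1 \<le> j" "j < m" "j \<notin> C - {i}" "Suc j \<notin> C - {i}" by blast
    then consider "j = i" | "Suc j = i" using cov[of j] by blast
    then show "(i < m \<and> Suc i \<notin> C) \<or> (1 < i \<and> i - 1 \<notin> C)"
    proof cases
      case 1
      then show ?thesis using j by simp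
    next
      case 2
      then have "i - 1 = j" "1 < i" "j \<notin> C" using j by auto
      then show ?thesis by simp
    qed
  next
    assume "(i < m \<and> Suc i \<notin> C) \<or> (1 < i \<and> i - 1 \<notin> C)"
    then show "\<exists>j. 1 \<le> j \<and> j < m \<and> j \<notin> C - {i} \<and> Suc j \<notin> C - {i}"
    proof
      assume "i < m \<and> Suc i \<notin> C"
      then show ?thesis using i by (intro exI[of _ i]) simp
    next
      assume h: "1 < i \<and> i - 1 \<notin> C"
      then have "1 \<le> i - 1" "i - 1 < m" "Suc (i - 1) = i" using i by auto
      then show ?thesis using h by (intro exI[of _ "i - 1"]) simp
    qed
  qed
  finally show ?thesis .
qed

lemma min_vertex_cover_iff:
  "min_vertex_cover m C \<longleftrightarrow>
     vertex_cover m C \<and> (\<forall>i\<in>C. (i < m \<and> Suc i \<notin> C) \<or> (1 < i \<and> i - 1 \<notin> C))"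
  using not_vertex_cover_remove_iff unfolding min_vertex_cover_iff_remove by blast

lemma min_vertex_cover_le_1: "m \<le> 1 \<Longrightarrow> min_vertex_cover m C \<Longrightarrow> C = {}"
  unfolding min_vertex_cover_def vertex_cover_def by auto

lemma min_vertex_cover_2:
  assumes "min_vertex_cover 2 C"
  shows "C = {1} \<or> C = {2}"
proof -
  have "C \<subseteq> {1, 2}" "1 \<in> C \<or> 2 \<in> C" "1 \<in> C \<longrightarrow> 2 \<notin> C"
    using assms unfolding min_vertex_cover_iff vertex_cover_def by (auto simp: numeral_2_eq_2)
  then show ?thesis by blast
qed

lemma min_vertex_cover_insert:
  assumes "min_vertex_cover N C"
  shows "min_vertex_cover (N + 2) (insert (N + 1) C)"
proof -
  have "C \<subseteq> {1..N}" using assms by (simp add: min_vertex_cover_iff vertex_cover_def)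
  then show ?thesis
    using assms unfolding min_vertex_cover_iff vertex_cover_def
    by (fastforce simp: less_Suc_eq)
qed

lemma min_vertex_cover_remove:
  assumes "min_vertex_cover (N + 2) C" "N + 1 \<in> C"
  shows "min_vertex_cover N (C - {N + 1})"
proof -
  have vc: "vertex_cover (N + 2) C"
    and priv: "\<And>i. i \<in> C \<Longrightarrow> (i < N + 2 \<and> Suc i \<notin> C) \<or> (1 < i \<and> i - 1 \<notin> C)"
    using assms(1) unfolding min_vertex_cover_iff by auto
  have "N + 2 \<notin> C" using priv[of "N + 2"] assms(2) by auto
  then have sub: "C - {N + 1} \<subseteq> {1..N}"
    using vc by (auto simp: vertex_cover_def le_Suc_eq)
  have "vertex_cover N (C - {N + 1})"
    using sub vc unfolding vertex_cover_def by auto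
  moreover have "(i < N \<and> Suc i \<notin> C - {N + 1}) \<or> (1 < i \<and> i - 1 \<notin> C - {N + 1})"
    if "i \<in> C - {N + 1}" for i
  proof -
    have "i \<le> N" using that sub by auto
    then show ?thesis using priv[of i] that assms(2) by (cases "i = N") auto
  qed
  ultimately show ?thesis unfolding min_vertex_cover_iff by blast
qed

lemma min_vertex_cover_remove_pair:
  assumes "min_vertex_cover (M + 3) C" "M + 2 \<notin> C"
  shows "M + 1 \<in> C" "M + 3 \<in> C" "min_vertex_cover M (C - {M + 1, M + 3})"
proof -
  have vc: "vertex_cover (M + 3) C"
    and priv: "\<And>i. i \<in> C \<Longrightarrow> (i < M + 3 \<and> Suc i \<notin> C) \<or> (1 < i \<and> i - 1 \<notin> C)"
    using assms(1) unfolding min_vertex_cover_iff by auto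
  have cov: "\<And>j. 1 \<le> j \<Longrightarrow> j < M + 3 \<Longrightarrow> j \<in> C \<or> Suc j \<in> C"
    using vc unfolding vertex_cover_def by auto
  from cov[of "M + 1"] cov[of "M + 2"]
  have "M + 1 \<in> C \<or> M + 2 \<in> C" "M + 2 \<in> C \<or> M + 3 \<in> C" by (simp_all add: eval_nat_numeral)
  then show in_C: "M + 1 \<in> C" "M + 3 \<in> C" using assms(2) by auto
  have "C \<subseteq> {1..M + 3}" using vc unfolding vertex_cover_def by simp
  then have sub: "C - {M + 1, M + 3} \<subseteq> {1..M}"
    using assms(2) by (auto simp: eval_nat_numeral le_Suc_eq)
  have "vertex_cover M (C - {M + 1, M + 3})"
    using sub vc unfolding vertex_cover_def by auto
  moreover have "(i < M \<and> Suc i \<notin> C - {M + 1, M + 3}) \<or> (1 < i \<and> i - 1 \<notin> C - {M + 1, M + 3})"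
    if "i \<in> C - {M + 1, M + 3}" for i
  proof -
    have "i \<le> M" using that sub by auto
    then show ?thesis using priv[of i] that in_C by (cases "i = M") auto
  qed
  ultimately show "min_vertex_cover M (C - {M + 1, M + 3})" unfolding min_vertex_cover_iff by blast
qed

lemma rooted_list_add_5:
  "rooted_list (k + 5) =
     map (add_mset (k + 4)) (rooted_list (k + 3)) @
     map (\<lambda>v. add_mset (k + 5) (add_mset (k + 3) v)) (rooted_list (k + 2))"
proof -
  have "k + 5 = Suc (Suc (Suc (Suc (Suc k))))" by simp
  then show ?thesis by (simp only: rooted_list.simps(6))
qed

lemma set_mset_rooted_list:
  "u \<in> set (rooted_list m) \<Longrightarrow> set_mset u \<subseteq> {1..m}"
proof (induction m arbitrary: u rule: rooted_list.induct)
  case (6 k)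
  have m: "Suc (Suc (Suc (Suc (Suc k)))) = k + 5" by simp
  show ?case using 6 unfolding m rooted_list_add_5 by fastforce
qed (auto simp: eval_nat_numeral)

lemma rooted_list_add_2:
  assumes "2 \<le> N"
  obtains T where "rooted_list (N + 2) = map (add_mset (N + 1)) (rooted_list N) @ T"
    and "\<forall>t\<in>set T. N + 1 \<notin># t"
proof (cases "N = 2")
  case True
  then show ?thesis by (intro that[of "[{#2, 4#}]"]) (simp_all add: eval_nat_numeral)
next
  case False
  then have "N - 3 + 5 = N + 2" "N - 3 + 4 = N + 1" "N - 3 + 3 = N" "N - 3 + 2 = N - 1"
    using assms by auto
  then have "rooted_list (N + 2) = map (add_mset (N + 1)) (rooted_list N) @
      map (\<lambda>v. add_mset (N + 2) (add_mset N v)) (rooted_list (N - 1))"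
    using rooted_list_add_5[of "N - 3"] by metis
  moreover have "\<forall>t\<in>set (map (\<lambda>v. add_mset (N + 2) (add_mset N v)) (rooted_list (N - 1))). N + 1 \<notin># t"
    using set_mset_rooted_list[of _ "N - 1"] by fastforce
  ultimately show ?thesis by (rule that)
qed

lemma add_mset_in_rooted_list_add_2:
  "2 \<le> N \<Longrightarrow> u \<in> set (rooted_list N) \<Longrightarrow> add_mset (N + 1) u \<in> set (rooted_list (N + 2))"
  by (elim rooted_list_add_2) auto

lemma add_mset_in_rooted_list_add_3:
  assumes "2 \<le> M" "u \<in> set (rooted_list M)"
  shows "add_mset (M + 3) (add_mset (M + 1) u) \<in> set (rooted_list (M + 3))"
proof -
  have "M - 2 + 5 = M + 3" "M - 2 + 3 = M + 1" "M - 2 + 2 = M" using assms(1) by auto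
  then have "rooted_list (M + 3) = map (add_mset (M - 2 + 4)) (rooted_list (M + 1)) @
      map (\<lambda>v. add_mset (M + 3) (add_mset (M + 1) v)) (rooted_list M)"
    using rooted_list_add_5[of "M - 2"] by metis
  then show ?thesis using assms(2) by simp
qed

lemma mset_set_remove_2:
  assumes "finite A" "x \<in> A" "y \<in> A" "x \<noteq> y"
  shows "mset_set A = add_mset x (add_mset y (mset_set (A - {y, x})))"
proof -
  have "mset_set A = add_mset x (mset_set (A - {x}))"
    using mset_set.remove[OF assms(1,2)] .
  also have "mset_set (A - {x}) = add_mset y (mset_set (A - {x} - {y}))"
    by (rule mset_set.remove) (use assms in auto)
  also have "A - {x} - {y} = A - {y, x}" by auto
  finally show ?thesis .
qed

lemma mset_set_in_rooted_list:
  "2 \<le> m \<Longrightarrow> min_vertex_cover m C \<Longrightarrow> mset_set C \<in> set (rooted_list m)"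
proof (induction m arbitrary: C rule: less_induct)
  case (less m)
  have fin: "finite C"
    using less.prems(2) finite_vertex_cover unfolding min_vertex_cover_def by blast
  \<comment> \<open>The two cases m - 1 \<in> C and m - 1 \<notin> C match the two halves of the recursion.\<close>
  consider "m = 2" | "3 \<le> m" "m - 1 \<in> C" | "3 \<le> m" "m - 1 \<notin> C"
    using less.prems(1) by linarith
  then show ?case
  proof cases
    case 1
    then have "C = {1} \<or> C = {2}" using min_vertex_cover_2 less.prems(2) by simp
    then show ?thesis using 1 by (auto simp: numeral_2_eq_2)
  next
    case 2
    define N where "N = m - 2"
    have m: "m = N + 2" and "1 \<le> N" using 2 by (auto simp: N_def)
    then have "N + 1 \<in> C" using 2 by simp
    then have C': "min_vertex_cover N (C - {N + 1})"
      using min_vertex_cover_remove less.prems(2) m by blast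
    have C: "mset_set C = add_mset (N + 1) (mset_set (C - {N + 1}))"
      using mset_set.remove[OF fin \<open>N + 1 \<in> C\<close>] .
    show ?thesis
    proof (cases "N = 1")
      case True
      then have "C - {N + 1} = {}" using C' min_vertex_cover_le_1 by blast
      then have "mset_set C = {#N + 1#}" unfolding C by (simp only: mset_set.empty)
      then show ?thesis using m True by (simp add: eval_nat_numeral)
    next
      case False
      then have "mset_set (C - {N + 1}) \<in> set (rooted_list N)"
        using less.IH[OF _ _ C'] m \<open>1 \<le> N\<close> by simp
      then show ?thesis unfolding C m using False \<open>1 \<le> N\<close> by (intro add_mset_in_rooted_list_add_2) auto
    qed
  next
    case 3
    define M where "M = m - 3"
    have m: "m = M + 3" using 3 by (simp add: M_def)
    then have "M + 2 \<notin> C" using 3 by simp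
    then have "M + 1 \<in> C" "M + 3 \<in> C" and C': "min_vertex_cover M (C - {M + 1, M + 3})"
      using min_vertex_cover_remove_pair less.prems(2) m by blast+
    then have C: "mset_set C = add_mset (M + 3) (add_mset (M + 1) (mset_set (C - {M + 1, M + 3})))"
      using mset_set_remove_2[OF fin \<open>M + 3 \<in> C\<close> \<open>M + 1 \<in> C\<close>] by simp
    show ?thesis
    proof (cases "M \<le> 1")
      case True
      then have "C - {M + 1, M + 3} = {}" using C' min_vertex_cover_le_1 by blast
      then have "mset_set C = {#M + 3, M + 1#}" unfolding C by (simp only: mset_set.empty)
      moreover have "M = 0 \<or> M = 1" using True by linarith
      ultimately show ?thesis using m by (auto simp: eval_nat_numeral)
    next
      case False
      then have "mset_set (C - {M + 1, M + 3}) \<in> set (rooted_list M)"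
        using less.IH[OF _ _ C'] m by simp
      then show ?thesis unfolding C m using False by (intro add_mset_in_rooted_list_add_3) auto
    qed
  qed
qed

lemma Gens_subset_rooted_list: "2 \<le> m \<Longrightarrow> Gens m \<subseteq> set (rooted_list m)"
  unfolding Gens_def using mset_set_in_rooted_list by blast

lemma count_mset_set_le_1: "count (mset_set A) x \<le> 1"
  by (cases "finite A"; cases "x \<in> A") simp_all

lemma count_Gens_le_1: "w \<in> Gens m \<Longrightarrow> count w x \<le> 1"
  unfolding Gens_def using count_mset_set_le_1 by auto

lemma add_mset_in_Gens_add_2: "u \<in> Gens N \<Longrightarrow> add_mset (N + 1) u \<in> Gens (N + 2)"
proof -
  assume "u \<in> Gens N"
  then obtain C where C: "min_vertex_cover N C" and u: "u = mset_set C"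
    unfolding Gens_def by blast
  then have "finite C" "N + 1 \<notin> C"
    using finite_vertex_cover unfolding min_vertex_cover_def vertex_cover_def by auto
  then have "add_mset (N + 1) u = mset_set (insert (N + 1) C)" using u by simp
  then show ?thesis unfolding Gens_def using min_vertex_cover_insert[OF C] by blast
qed

lemma Gens_add_2_containing:
  assumes "w \<in> Gens (N + 2)" "N + 1 \<in># w"
  obtains u where "u \<in> Gens N" "w = add_mset (N + 1) u"
proof -
  obtain C where C: "min_vertex_cover (N + 2) C" and w: "w = mset_set C"
    using assms(1) unfolding Gens_def by blast
  then have "finite C" using finite_vertex_cover unfolding min_vertex_cover_def by blast
  then have "N + 1 \<in> C" using assms(2) w by simp
  then have "w = add_mset (N + 1) (mset_set (C - {N + 1}))"
    using mset_set.remove[OF \<open>finite C\<close>] w by blast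
  moreover have "mset_set (C - {N + 1}) \<in> Gens N"
    unfolding Gens_def using min_vertex_cover_remove[OF C \<open>N + 1 \<in> C\<close>] by blast
  ultimately show ?thesis using that by blast
qed

lemma F2_add_2_iff: "U + {#N + 1, N + 1#} \<in> F2 (N + 2) \<longleftrightarrow> U \<in> F2 N"
proof
  assume "U \<in> F2 N"
  then obtain u v where "u \<in> Gens N" "v \<in> Gens N" "U = u + v"
    unfolding F2_def by blast
  moreover from this have "U + {#N + 1, N + 1#} = add_mset (N + 1) u + add_mset (N + 1) v"
    by simp
  ultimately show "U + {#N + 1, N + 1#} \<in> F2 (N + 2)"
    unfolding F2_def using add_mset_in_Gens_add_2 by blast
next
  assume "U + {#N + 1, N + 1#} \<in> F2 (N + 2)"
  then obtain u' v' where u': "u' \<in> Gens (N + 2)" and v': "v' \<in> Gens (N + 2)"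
    and U: "U + {#N + 1, N + 1#} = u' + v'"
    unfolding F2_def by blast
  have "count U (N + 1) + 2 = count u' (N + 1) + count v' (N + 1)"
    using arg_cong[OF U, of "\<lambda>M. count M (N + 1)"] by simp
  then have "0 < count u' (N + 1)" "0 < count v' (N + 1)"
    using count_Gens_le_1[OF u', of "N + 1"] count_Gens_le_1[OF v', of "N + 1"] by linarith+
  then have "N + 1 \<in># u'" "N + 1 \<in># v'" by simp_all
  then obtain u v where "u \<in> Gens N" "v \<in> Gens N" "u' = add_mset (N + 1) u" "v' = add_mset (N + 1) v"
    using Gens_add_2_containing u' v' by metis
  moreover from this have "U = u + v" using U by simp
  ultimately show "U \<in> F2 N" unfolding F2_def by blast
qed

definition power_product :: "nat list \<Rightarrow> monomial list \<Rightarrow> monomial" where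
  "power_product a L = sum_list (map2 repeat_mset a L)"

definition expression_vectors :: "monomial list \<Rightarrow> monomial \<Rightarrow> nat list set" where
  "expression_vectors L M = {a. length a = length L \<and> sum_list a = 2 \<and> M = power_product a L}"

lemma expressions_eq_expression_vectors: "expressions m M = expression_vectors (rooted_list m) M"
  unfolding expressions_def expression_vectors_def power_product_def ..

lemma power_product_append:
  "length a = length L \<Longrightarrow> power_product (a @ b) (L @ T) = power_product a L + power_product b T"
  by (simp add: power_product_def zip_append)

lemma power_product_map_add_mset:
  "length a = length L \<Longrightarrow>
     power_product a (map (add_mset x) L) = replicate_mset (sum_list a) x + power_product a L"
  unfolding power_product_def by (induction a L rule: list_induct2) (simp_all add: multiset_eq_iff)

lemma count_power_product_eq_0:
  "\<forall>u\<in>set L. x \<notin># u \<Longrightarrow> count (power_product a L) x = 0"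
  unfolding power_product_def
proof (induction a arbitrary: L)
  case (Cons k a)
  then show ?case by (cases L) (simp_all add: not_in_iff)
qed simp

lemma power_product_replicate_0: "power_product (replicate n 0) L = {#}"
  unfolding power_product_def
proof (induction n arbitrary: L)
  case (Suc n)
  then show ?case by (cases L) simp_all
qed simp

lemma power_product_map2_plus:
  assumes "length a = length L" "length b = length L"
  shows "power_product (map2 (+) a b) L = power_product a L + power_product b L"
proof -
  have "length a = length b" "length b = length L" using assms by simp_all
  then show ?thesis unfolding power_product_def
    by (induction a b L rule: list_induct3) (simp_all add: repeat_mset_distrib ac_simps)
qed

lemma sum_list_map2_plus:
  "length a = length b \<Longrightarrow> sum_list (map2 (+) a b) = sum_list a + (sum_list b :: nat)"
  by (induction a b rule: list_induct2) simp_all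

lemma ex_unit_vector_power_product:
  "u \<in> set L \<Longrightarrow> \<exists>a. length a = length L \<and> sum_list a = 1 \<and> power_product a L = u"
proof (induction L)
  case (Cons w L)
  show ?case
  proof (cases "u = w")
    case True
    then show ?thesis
      by (intro exI[of _ "1 # replicate (length L) 0"])
        (simp add: power_product_def power_product_replicate_0[unfolded power_product_def])
  next
    case False
    with Cons obtain a where "length a = length L" "sum_list a = 1" "power_product a L = u"
      by auto
    then show ?thesis by (intro exI[of _ "0 # a"]) (simp add: power_product_def)
  qed
qed simp

lemma expression_vectors_add_nonempty:
  assumes "u \<in> set L" "v \<in> set L"
  shows "expression_vectors L (u + v) \<noteq> {}"
proof -
  obtain a b where "length a = length L" "sum_list a = 1" "power_product a L = u"
    and "length b = length L" "sum_list b = 1" "power_product b L = v"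
    using ex_unit_vector_power_product assms by metis
  then have "map2 (+) a b \<in> expression_vectors L (u + v)"
    unfolding expression_vectors_def by (simp add: power_product_map2_plus sum_list_map2_plus)
  then show ?thesis by blast
qed

lemma finite_expression_vectors: "finite (expression_vectors L M)"
proof (rule finite_subset)
  show "expression_vectors L M \<subseteq> {a. set a \<subseteq> {0..2} \<and> length a = length L}"
    unfolding expression_vectors_def using member_le_sum_list by fastforce
  show "finite {a. set a \<subseteq> {0..2::nat} \<and> length a = length L}"
    by (rule finite_lists_length_eq) simp
qed

lemma expression_vectors_map_add_mset_append:
  assumes L: "\<forall>u\<in>set L. x \<notin># u" and T: "\<forall>t\<in>set T. x \<notin># t"
  shows "expression_vectors (map (add_mset x) L @ T) (U + {#x, x#}) =
    (\<lambda>a. a @ replicate (length T) 0) ` expression_vectors L U"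
proof (intro equalityI subsetI)
  fix c assume "c \<in> expression_vectors (map (add_mset x) L @ T) (U + {#x, x#})"
  then have len: "length c = length L + length T" and sum: "sum_list c = 2"
    and U: "U + {#x, x#} = power_product c (map (add_mset x) L @ T)"
    unfolding expression_vectors_def by auto
  define a b where "a = take (length L) c" and "b = drop (length L) c"
  have c: "c = a @ b" and a: "length a = length L" and b: "length b = length T"
    using len by (simp_all add: a_def b_def)
  have U': "U + {#x, x#} = replicate_mset (sum_list a) x + power_product a L + power_product b T"
    using U unfolding c by (simp add: a power_product_append power_product_map_add_mset)
  \<comment> \<open>Counting x: the exponents on the first block already sum to 2.\<close>
  have "count U x + 2 = sum_list a"
    using arg_cong[OF U', of "\<lambda>M. count M x"] count_power_product_eq_0[OF L] count_power_product_eq_0[OF T]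
    by simp
  moreover have "sum_list a + sum_list b = 2" using sum unfolding c by simp
  ultimately have "sum_list a = 2" "sum_list b = 0" by linarith+
  then have b0: "b = replicate (length T) 0"
    using b replicate_length_same[of b 0] by simp
  then have "U = power_product a L"
    using U' \<open>sum_list a = 2\<close> by (simp add: power_product_replicate_0 numeral_2_eq_2)
  then have "a \<in> expression_vectors L U"
    unfolding expression_vectors_def using a \<open>sum_list a = 2\<close> by simp
  then show "c \<in> (\<lambda>a. a @ replicate (length T) 0) ` expression_vectors L U"
    unfolding c b0 by blast
next
  fix c assume "c \<in> (\<lambda>a. a @ replicate (length T) 0) ` expression_vectors L U"
  then obtain a where c: "c = a @ replicate (length T) 0" and a: "a \<in> expression_vectors L U"
    by blast
  then have "length a = length L" "sum_list a = 2" "U = power_product a L"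
    unfolding expression_vectors_def by auto
  then show "c \<in> expression_vectors (map (add_mset x) L @ T) (U + {#x, x#})"
    unfolding expression_vectors_def c
    by (simp add: power_product_append power_product_map_add_mset power_product_replicate_0
        numeral_2_eq_2 add.commute)
qed

lemma append_less_append_same_length_iff:
  "length xs = length ys \<Longrightarrow> xs @ zs < ys @ zs \<longleftrightarrow> xs < (ys :: 'a :: order list)"
  by (induction xs ys rule: list_induct2) auto

lemma mono_on_Max_commute:
  assumes "mono_on A f" "finite A" "A \<noteq> {}"
  shows "f (Max A) = Max (f ` A)"
proof (rule Max_eqI [symmetric])
  show "finite (f ` A)" "f (Max A) \<in> f ` A" using assms(2,3) by simp_all
  show "y \<le> f (Max A)" if y: "y \<in> f ` A" for y
  proof -
    obtain x where "x \<in> A" "y = f x" using y by blast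
    moreover have "x \<le> Max A" "Max A \<in> A" using calculation(1) assms(2,3) by simp_all
    ultimately show ?thesis using mono_onD[OF assms(1)] by simp
  qed
qed

lemma mono_on_append_same_length:
  "mono_on {xs. length xs = n} (\<lambda>xs. xs @ zs :: 'a :: order list)"
  by (rule mono_onI) (auto simp: order_le_less append_less_append_same_length_iff)

lemma max_expression_add_2:
  assumes "2 \<le> N" "U \<in> F2 N"
  shows "max_expression (N + 2) (U + {#N + 1, N + 1#}) =
    max_expression N U @ replicate (length (rooted_list (N + 2)) - length (rooted_list N)) 0"
    and "length (max_expression N U) = length (rooted_list N)"
proof -
  obtain T where R: "rooted_list (N + 2) = map (add_mset (N + 1)) (rooted_list N) @ T"
    and T: "\<forall>t\<in>set T. N + 1 \<notin># t"
    using rooted_list_add_2[OF assms(1)] by blast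
  have "\<forall>u\<in>set (rooted_list N). N + 1 \<notin># u" using set_mset_rooted_list by fastforce
  then have E: "expressions (N + 2) (U + {#N + 1, N + 1#}) =
      (\<lambda>a. a @ replicate (length T) 0) ` expressions N U"
    unfolding expressions_eq_expression_vectors R
    using expression_vectors_map_add_mset_append T by blast
  obtain u v where "u \<in> Gens N" "v \<in> Gens N" "U = u + v"
    using assms(2) unfolding F2_def by blast
  then have ne: "expressions N U \<noteq> {}"
    unfolding expressions_eq_expression_vectors
    using expression_vectors_add_nonempty Gens_subset_rooted_list[OF assms(1)] by blast
  have fin: "finite (expressions N U)"
    unfolding expressions_eq_expression_vectors by (rule finite_expression_vectors)
  have sub: "expressions N U \<subseteq> {a. length a = length (rooted_list N)}"
    unfolding expressions_eq_expression_vectors expression_vectors_def by blast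
  have "length T = length (rooted_list (N + 2)) - length (rooted_list N)" using R by simp
  then show "max_expression (N + 2) (U + {#N + 1, N + 1#}) =
      max_expression N U @ replicate (length (rooted_list (N + 2)) - length (rooted_list N)) 0"
    unfolding max_expression_def E
    using mono_on_Max_commute[OF mono_on_subset[OF mono_on_append_same_length sub] fin ne] by simp
  show "length (max_expression N U) = length (rooted_list N)"
    unfolding max_expression_def using Max_in[OF fin ne] sub by blast
qed

theorem lemma3p3:
  fixes n :: nat and U V :: monomial
  assumes "n \<ge> 4"
  shows "((U \<in> F2 (n - 2) \<and> V \<in> F2 (n - 2)) \<longleftrightarrow>
           (U + {#n - 1, n - 1#} \<in> F2 n \<and> V + {#n - 1, n - 1#} \<in> F2 n)) \<and>
         (U \<in> F2 (n - 2) \<and> V \<in> F2 (n - 2) \<longrightarrow>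
           (rooted_gt (n - 2) U V \<longleftrightarrow>
            rooted_gt n (U + {#n - 1, n - 1#}) (V + {#n - 1, n - 1#})))"
proof -
  define N where "N = n - 2"
  have N: "2 \<le> N" and n: "n - 2 = N" "n - 1 = N + 1" "n = N + 2"
    using assms by (simp_all add: N_def)
  have "rooted_gt N U V \<longleftrightarrow> rooted_gt (N + 2) (U + {#N + 1, N + 1#}) (V + {#N + 1, N + 1#})"
    if "U \<in> F2 N" "V \<in> F2 N"
  proof -
    have "length (max_expression N V) = length (max_expression N U)"
      using max_expression_add_2(2)[OF N] that by simp
    then show ?thesis unfolding rooted_gt_def
        max_expression_add_2(1)[OF N that(1)] max_expression_add_2(1)[OF N that(2)]
      by (simp add: append_less_append_same_length_iff)
  qed
  then show ?thesis unfolding n(1,2) unfolding n(3)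
    using F2_add_2_iff[of U N] F2_add_2_iff[of V N] by simp
qed

end
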